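(* Let $(M,J,g,\nabla)$ be an affine special $\epsilon$-K\"ahler manifold of real dimension $2n$, let $U\subset M$ be a connected open subset and $\phi:U\to V=\mathbb{C}_\epsilon^{2n}$ an $\epsilon$-K\"ahlerian Lagrangian immersion inducing the special geometric data on $U$, such that $\tilde z^i=z^i\circ\phi$, $i=1,\dots,n$, form a system of holomorphic coordinates on $U$ (special holomorphic coordinates) with image $\tilde U\subset\mathbb{C}_\epsilon^n$, and let $F:\tilde U\to\mathbb{C}_\epsilon$ be a holomorphic prepotential, i.e. $\phi(U)=\{(z,w)\in\mathbb{C}_\epsilon^{2n}: z\in\tilde U,\ w_i=\partial F/\partial z^i(z),\ i=1,\dots,n\}$ ($F$ is determined up to an additive constant). Then $F$ can be chosen homogeneous of degree $2$ if and only if the special holomorphic coordinates are conical, i.e. if and only if $\phi$ is conical.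
   Context: Let $\epsilon\in\{-1,1\}$, $\mathbb{C}_\epsilon=\mathbb{R}[i_\epsilon]$, $i_\epsilon^2=\epsilon$, conjugation $\overline{a+i_\epsilon b}=a-i_\epsilon b$. An $\epsilon$-K\"ahler manifold $(M,J,g)$ is pseudo-Riemannian with parallel $g$-skew $J$, $J^2=\epsilon\mathrm{Id}$, K\"ahler form $\omega=\epsilon g(J\cdot,\cdot)$; affine special means there is a flat torsion-free $\nabla$ with $\nabla\omega=0$, $(\nabla_XJ)Y=(\nabla_YJ)X$. A function is ($\epsilon$-)holomorphic if $df\,J=i_\epsilon df$. On $V=\mathbb{C}_\epsilon^{2n}$ take coordinates $(z^i,w_i)$, $\Omega=\sum dz^i\wedge dw_i$, $\gamma=i_\epsilon\Omega(\cdot,\bar\cdot)$; a holomorphic immersion $\phi$ is $\epsilon$-K\"ahlerian if $\phi^*\gamma$ is nondegenerate, Lagrangian if $\phi^*\Omega=0$; it induces $g=\phi^*\mathrm{Re}\,\gamma$ and the flat connection $\nabla$ having $(\mathrm{Re}\,z^i\circ\phi,\mathrm{Re}\,w_i\circ\phi)$ as affine coordinates. $\phi$ is conical if the position vector field $\xi^V_p=p$ of $V$ is tangent along $\phi$, i.e. $\xi^V_{\phi(p)}\in d\phi_pT_pU$ for all $p$. A function $F$ on $\tilde U$ is homogeneous of degree $k$ if for every $z\in\tilde U$ there is a neighbourhood $W\subset\mathbb{C}_\epsilon$ of $1$ with $\lambda z\in\tilde U$ and $F(\lambda z)=\lambda^kF(z)$ for all $\lambda\in W$. *)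

theory Defs
  imports "HOL-Analysis.Analysis"
begin

text \<open>The epsilon-complex numbers C_eps = R[i_eps], i_eps^2 = eps, realised as real \<times> real
  (a, b) = a + i_eps b, with eps a real parameter (eps = 1 or eps = -1).\<close>

definition emul :: "real \<Rightarrow> real \<times> real \<Rightarrow> real \<times> real \<Rightarrow> real \<times> real" where
  "emul eps p q = (fst p * fst q + eps * snd p * snd q, fst p * snd q + snd p * fst q)"

definition iunit :: "real \<times> real" where
  "iunit = (0, 1)"

definition econj :: "real \<times> real \<Rightarrow> real \<times> real" where
  "econj p = (fst p, - snd p)"

primrec epow :: "real \<Rightarrow> real \<times> real \<Rightarrow> nat \<Rightarrow> real \<times> real" where
  "epow eps l 0 = (1, 0)"
| "epow eps l (Suc k) = emul eps l (epow eps l k)"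

definition escale :: "real \<Rightarrow> real \<times> real \<Rightarrow> (real \<times> real) ^ 'n \<Rightarrow> (real \<times> real) ^ 'n" where
  "escale eps l z = (\<chi> i. emul eps l (z $ i))"

definition eholo :: "real \<Rightarrow> ((real \<times> real) ^ 'n) set \<Rightarrow> ((real \<times> real) ^ 'n \<Rightarrow> real \<times> real) \<Rightarrow> bool" where
  "eholo eps U F \<longleftrightarrow> (\<forall>z\<in>U. \<exists>D. (F has_derivative D) (at z) \<and>
      (\<forall>h. D (escale eps iunit h) = emul eps iunit (D h)))"

definition epartial :: "((real \<times> real) ^ 'n \<Rightarrow> real \<times> real) \<Rightarrow> (real \<times> real) ^ 'n \<Rightarrow> 'n \<Rightarrow> real \<times> real" where
  "epartial F z i = frechet_derivative F (at z) (axis i (1, 0))"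

text \<open>V = C_eps^{2n} with coordinates (z^i, w_i); Omega = sum dz^i wedge dw_i,
  gamma = i_eps Omega(., conj .).\<close>
definition eOmega :: "real \<Rightarrow> ((real \<times> real) ^ 'n) \<times> ((real \<times> real) ^ 'n) \<Rightarrow>
    ((real \<times> real) ^ 'n) \<times> ((real \<times> real) ^ 'n) \<Rightarrow> real \<times> real" where
  "eOmega eps p q = (\<Sum>i\<in>UNIV. emul eps (fst p $ i) (snd q $ i) - emul eps (snd p $ i) (fst q $ i))"

definition econjV :: "((real \<times> real) ^ 'n) \<times> ((real \<times> real) ^ 'n) \<Rightarrow> ((real \<times> real) ^ 'n) \<times> ((real \<times> real) ^ 'n)" where
  "econjV p = ((\<chi> i. econj (fst p $ i)), (\<chi> i. econj (snd p $ i)))"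

definition egamma :: "real \<Rightarrow> ((real \<times> real) ^ 'n) \<times> ((real \<times> real) ^ 'n) \<Rightarrow>
    ((real \<times> real) ^ 'n) \<times> ((real \<times> real) ^ 'n) \<Rightarrow> real \<times> real" where
  "egamma eps p q = emul eps iunit (eOmega eps p (econjV q))"

text \<open>phi : U \<rightarrow> V is a holomorphic immersion (all coordinate functions holomorphic,
  injective differential), eps-Kaehlerian (pullback of gamma nondegenerate) and
  Lagrangian (pullback of Omega vanishes).\<close>
definition ekahler_lagrangian_imm :: "real \<Rightarrow> ((real \<times> real) ^ 'n) set \<Rightarrow>
    ((real \<times> real) ^ 'n \<Rightarrow> ((real \<times> real) ^ 'n) \<times> ((real \<times> real) ^ 'n)) \<Rightarrow> bool" where
  "ekahler_lagrangian_imm eps U phi \<longleftrightarrow>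
     (\<forall>i. eholo eps U (\<lambda>z. fst (phi z) $ i) \<and> eholo eps U (\<lambda>z. snd (phi z) $ i)) \<and>
     (\<forall>z\<in>U. \<exists>D. (phi has_derivative D) (at z) \<and> inj D \<and>
        (\<forall>X. (\<forall>Y. egamma eps (D X) (D Y) = 0) \<longrightarrow> X = 0) \<and>
        (\<forall>X Y. eOmega eps (D X) (D Y) = 0))"

text \<open>phi is conical: the position vector field of V is tangent along phi.\<close>
definition conical :: "((real \<times> real) ^ 'n) set \<Rightarrow>
    ((real \<times> real) ^ 'n \<Rightarrow> ((real \<times> real) ^ 'n) \<times> ((real \<times> real) ^ 'n)) \<Rightarrow> bool" where
  "conical U phi \<longleftrightarrow> (\<forall>z\<in>U. \<exists>D. (phi has_derivative D) (at z) \<and> phi z \<in> range D)"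

definition ehomogeneous :: "real \<Rightarrow> nat \<Rightarrow> ((real \<times> real) ^ 'n) set \<Rightarrow>
    ((real \<times> real) ^ 'n \<Rightarrow> real \<times> real) \<Rightarrow> bool" where
  "ehomogeneous eps k U F \<longleftrightarrow> (\<forall>z\<in>U. \<exists>W. open W \<and> (1, 0) \<in> W \<and>
      (\<forall>l\<in>W. escale eps l z \<in> U \<and> F (escale eps l z) = emul eps (epow eps l k) (F z)))"

end

theory Submission
  imports Defs
begin

text \<open>Write \<open>\<phi> = (id, P)\<close> with \<open>P = \<partial>F\<close>; its derivative is \<open>h \<mapsto> (h, A h)\<close>, where \<open>A = dP\<close> is
  \<open>\<complex>\<^sub>\<epsilon>\<close>-linear and, by the Lagrangian condition, symmetric for the \<open>\<complex>\<^sub>\<epsilon>\<close>-bilinear pairing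
  \<open>\<langle>x, y\<rangle> = \<Sum> x\<^sub>i y\<^sub>i\<close>. Hence \<open>\<phi>\<close> is conical iff \<open>A\<^sub>z z = P z\<close> everywhere (an Euler equation for \<open>P\<close>).
  If the prepotential \<open>G\<close> is homogeneous of degree 2, Euler's relation gives \<open>\<langle>w, P w\<rangle> = 2 G w\<close>;
  differentiating and using the symmetry of \<open>A\<close> yields \<open>A\<^sub>z z = P z\<close>. Conversely, under the Euler
  equation \<open>G = \<langle>w, P w\<rangle>/2\<close> is a prepotential, and \<open>\<lambda>\<^sup>-\<^sup>1 P(\<lambda> z)\<close> has vanishing derivative in \<open>\<lambda>\<close>,
  so \<open>P\<close> is homogeneous of degree 1 and \<open>G\<close> of degree 2 near \<open>\<lambda> = 1\<close>.\<close>

lemma emul_commute: "emul e p q = emul e q p"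
  by (simp add: emul_def prod_eq_iff algebra_simps)

lemma emul_assoc: "emul e (emul e p q) r = emul e p (emul e q r)"
  by (simp add: emul_def prod_eq_iff algebra_simps)

lemma emul_left_commute: "emul e p (emul e q r) = emul e q (emul e p r)"
  by (simp add: emul_def prod_eq_iff algebra_simps)

lemma emul_one_left [simp]: "emul e (1, 0) p = p"
  by (simp add: emul_def)

lemma emul_one_right [simp]: "emul e p (1, 0) = p"
  by (simp add: emul_def)

lemma emul_of_real: "emul e (c, 0) p = c *\<^sub>R p"
  by (simp add: emul_def prod_eq_iff)

lemma emul_decompose: "emul e (a, b) q = a *\<^sub>R q + b *\<^sub>R emul e iunit q"
  by (simp add: emul_def iunit_def prod_eq_iff algebra_simps)

lemma bounded_bilinear_emul: "bounded_bilinear (emul e)"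
proof -
  have "bilinear (emul e)"
    unfolding bilinear_def by (auto intro!: linearI simp: emul_def algebra_simps)
  then show ?thesis
    using bilinear_conv_bounded_bilinear by blast
qed

lemmas emul_zero_left [simp] = bounded_bilinear.zero_left[OF bounded_bilinear_emul]
  and emul_zero_right [simp] = bounded_bilinear.zero_right[OF bounded_bilinear_emul]
  and emul_add_right = bounded_bilinear.add_right[OF bounded_bilinear_emul]
  and emul_scaleR_right = bounded_bilinear.scaleR_right[OF bounded_bilinear_emul]
  and emul_minus_right = bounded_bilinear.minus_right[OF bounded_bilinear_emul]
  and emul_sum_right = bounded_bilinear.sum_right[OF bounded_bilinear_emul]

lemma epow_two: "epow e l 2 = emul e l l"
  by (simp add: numeral_2_eq_2)

lemma escale_nth [simp]: "escale e l z $ i = emul e l (z $ i)"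
  by (simp add: escale_def)

lemma escale_of_real: "escale e (c, 0) z = c *\<^sub>R z"
  by (simp add: vec_eq_iff emul_of_real)

lemma escale_one [simp]: "escale e (1, 0) z = z"
  by (simp add: vec_eq_iff)

lemma escale_escale: "escale e l (escale e m z) = escale e (emul e l m) z"
  by (simp add: vec_eq_iff emul_assoc)

lemma escale_decompose: "escale e (a, b) z = a *\<^sub>R z + b *\<^sub>R escale e iunit z"
  by (simp add: vec_eq_iff emul_decompose)

lemma bounded_bilinear_escale:
  "bounded_bilinear (escale e :: real \<times> real \<Rightarrow> (real \<times> real) ^ 'n \<Rightarrow> _)"
proof -
  have "bilinear (escale e :: real \<times> real \<Rightarrow> (real \<times> real) ^ 'n \<Rightarrow> _)"
    unfolding bilinear_def by (auto intro!: linearI simp: vec_eq_iff emul_def algebra_simps)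
  then show ?thesis
    using bilinear_conv_bounded_bilinear by blast
qed

definition enorm2 :: "real \<Rightarrow> real \<times> real \<Rightarrow> real" where
  "enorm2 e l = fst l ^ 2 - e * snd l ^ 2"

definition einv :: "real \<Rightarrow> real \<times> real \<Rightarrow> real \<times> real" where
  "einv e l = (fst l / enorm2 e l, - snd l / enorm2 e l)"

lemma emul_einv: "enorm2 e l \<noteq> 0 \<Longrightarrow> emul e l (einv e l) = (1, 0)"
  by (simp add: einv_def emul_def enorm2_def power2_eq_square diff_divide_distrib[symmetric])

lemma einv_one [simp]: "einv e (1, 0) = (1, 0)"
  by (simp add: einv_def enorm2_def)

lemma open_enorm2_nonzero: "open {l. enorm2 e l \<noteq> 0}"
  unfolding enorm2_def by (intro open_Collect_neq continuous_intros)

lemma has_derivative_einv: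
  assumes l: "enorm2 e l \<noteq> 0"
  shows "(einv e has_derivative (\<lambda>\<delta>. - emul e \<delta> (emul e (einv e l) (einv e l)))) (at l)"
proof -
  have N: "(enorm2 e has_derivative (\<lambda>h. 2 * fst l * fst h - e * (2 * snd l * snd h))) (at l)"
    unfolding enorm2_def by (intro derivative_eq_intros refl) (auto simp: algebra_simps)
  obtain E where E: "(einv e has_derivative E) (at l)"
    using has_derivative_Pair[OF has_derivative_divide[OF has_derivative_fst[OF has_derivative_ident] N l]
        has_derivative_divide[OF has_derivative_minus[OF has_derivative_snd[OF has_derivative_ident]] N l]]
    unfolding einv_def by blast
  have "((\<lambda>m. emul e m (einv e m)) has_derivative (\<lambda>\<delta>. emul e l (E \<delta>) + emul e \<delta> (einv e l))) (at l)"
    using bounded_bilinear.FDERIV[OF bounded_bilinear_emul has_derivative_ident E] .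
  then have "((\<lambda>m. (1, 0)) has_derivative (\<lambda>\<delta>. emul e l (E \<delta>) + emul e \<delta> (einv e l))) (at l)"
    by (rule has_derivative_transform_within_open[OF _ open_enorm2_nonzero[of e]]) (simp_all add: l emul_einv)
  then have "(\<lambda>\<delta>. emul e l (E \<delta>) + emul e \<delta> (einv e l)) = (\<lambda>\<delta>. 0)"
    using has_derivative_const has_derivative_unique by blast
  then have E_eq: "emul e l (E \<delta>) = - emul e \<delta> (einv e l)" for \<delta>
    by (metis eq_neg_iff_add_eq_0)
  have "E \<delta> = - emul e \<delta> (emul e (einv e l) (einv e l))" for \<delta>
  proof -
    have "E \<delta> = emul e (emul e (einv e l) l) (E \<delta>)"
      by (simp add: emul_commute[of e "einv e l"] emul_einv l)
    also have "\<dots> = - emul e (einv e l) (emul e \<delta> (einv e l))"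
      by (simp add: emul_assoc E_eq emul_minus_right)
    finally show ?thesis
      by (simp add: emul_left_commute)
  qed
  then have "E = (\<lambda>\<delta>. - emul e \<delta> (emul e (einv e l) (einv e l)))"
    by auto
  then show ?thesis
    using E by simp
qed

text \<open>The \<open>\<complex>\<^sub>\<epsilon>\<close>-bilinear (not Hermitian) pairing on \<open>\<complex>\<^sub>\<epsilon>\<^sup>n\<close>.\<close>

definition edot :: "real \<Rightarrow> (real \<times> real) ^ 'n \<Rightarrow> (real \<times> real) ^ 'n \<Rightarrow> real \<times> real" where
  "edot e x y = (\<Sum>i\<in>UNIV. emul e (x $ i) (y $ i))"

lemma edot_commute: "edot e x y = edot e y x"
  by (simp add: edot_def emul_commute)

lemma eOmega_eq_edot: "eOmega e p q = edot e (fst p) (snd q) - edot e (snd p) (fst q)"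
  by (simp add: eOmega_def edot_def sum_subtractf)

lemma edot_axis_left [simp]: "edot e (axis j (1, 0)) y = y $ j"
proof -
  have "emul e (axis j (1, 0) $ i) (y $ i) = (if i = j then y $ j else 0)" for i
    by (simp add: axis_def)
  then show ?thesis
    by (simp add: edot_def)
qed

lemma edot_escale_left: "edot e (escale e l x) y = emul e l (edot e x y)"
  by (simp add: edot_def emul_sum_right emul_assoc)

lemma edot_escale_escale: "edot e (escale e l x) (escale e m y) = emul e (emul e l m) (edot e x y)"
  by (simp add: edot_def emul_sum_right emul_assoc emul_left_commute)

lemma vec_eq_iff_edot: "x = y \<longleftrightarrow> (\<forall>h. edot e h x = edot e h y)"
  by (metis edot_axis_left vec_eq_iff)

lemma bounded_bilinear_edot: "bounded_bilinear (edot e :: (real \<times> real) ^ 'n \<Rightarrow> _)"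
proof -
  have "linear (edot e x)" for x :: "(real \<times> real) ^ 'n"
    by (rule linearI) (simp_all add: edot_def emul_add_right emul_scaleR_right sum.distrib scaleR_sum_right)
  moreover have "(\<lambda>x. edot e x y) = edot e y" for y :: "(real \<times> real) ^ 'n"
    using edot_commute by blast
  ultimately have "bilinear (edot e :: (real \<times> real) ^ 'n \<Rightarrow> _)"
    unfolding bilinear_def by simp
  then show ?thesis
    using bilinear_conv_bounded_bilinear by blast
qed

lemma has_derivative_edot_self:
  assumes "(P has_derivative A) (at z)"
  shows "((\<lambda>w. edot e w (P w)) has_derivative (\<lambda>h. edot e z (A h) + edot e h (P z))) (at z)"
  using bounded_bilinear.FDERIV[OF bounded_bilinear_edot has_derivative_ident assms] .

lemma linear_escale_if_commute_iunit:
  assumes "linear A" and "\<And>h. A (escale e iunit h) = escale e iunit (A h)"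
  shows "A (escale e l h) = escale e l (A h)"
  using assms by (cases l) (simp add: escale_decompose linear_add linear_scale)

lemma linear_eq_edot_if_commute_iunit:
  assumes lin: "linear D" and hol: "\<And>h. D (escale e iunit h) = emul e iunit (D h)"
  shows "D h = edot e h (\<chi> i. D (axis i (1, 0)))"
proof -
  have D_axis: "D (axis i c) = emul e c (D (axis i (1, 0)))" for i c
  proof (cases c)
    case (Pair a b)
    have ax: "axis i (a, b) = a *\<^sub>R axis i (1, 0) + b *\<^sub>R escale e iunit (axis i (1, 0))"
      by (simp add: vec_eq_iff axis_def emul_def iunit_def zero_prod_def)
    show ?thesis
      unfolding Pair by (subst ax) (simp add: linear_add[OF lin] linear_scale[OF lin] hol emul_decompose)
  qed
  have "h = (\<Sum>i\<in>UNIV. axis i (h $ i))"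
    by (simp add: vec_eq_iff sum_component axis_def)
  then have "D h = (\<Sum>i\<in>UNIV. D (axis i (h $ i)))"
    by (metis linear_sum[OF lin])
  also have "\<dots> = (\<Sum>i\<in>UNIV. emul e (h $ i) (D (axis i (1, 0))))"
    by (rule sum.cong[OF refl D_axis])
  finally show ?thesis
    by (simp add: edot_def)
qed

lemma derivative_eq_edot_if_potential:
  assumes G: "eholo e U G" and w: "w \<in> U" and partial: "\<And>i. epartial G w i = P w $ i"
  shows "(G has_derivative (\<lambda>h. edot e h (P w))) (at w)"
proof -
  obtain D where D: "(G has_derivative D) (at w)" and hol: "\<And>h. D (escale e iunit h) = emul e iunit (D h)"
    using G w unfolding eholo_def by blast
  have "D (axis i (1, 0)) = P w $ i" for i
    using partial[of i] unfolding epartial_def frechet_derivative_at[OF D, symmetric] .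
  then have "(\<chi> i. D (axis i (1, 0))) = P w"
    by (simp add: vec_eq_iff)
  then have "D = (\<lambda>h. edot e h (P w))"
    using linear_eq_edot_if_commute_iunit[OF has_derivative_linear[OF D] hol] by (intro ext) metis
  then show ?thesis
    using D by simp
qed

lemma derivative_self_eq_if_ehomogeneous_two:
  assumes hom: "ehomogeneous e 2 U G" and w: "w \<in> U" and D: "(G has_derivative D) (at w)"
  shows "D w = 2 *\<^sub>R G w"
proof -
  obtain W where W: "open W" "(1, 0) \<in> W"
    and WG: "\<And>l. l \<in> W \<Longrightarrow> G (escale e l w) = emul e (epow e l 2) (G w)"
    using hom w unfolding ehomogeneous_def by metis
  define T where "T = (\<lambda>t::real. (1 + t, 0::real)) -` W"
  have T: "open T" "0 \<in> T"
    using W unfolding T_def by (auto intro!: continuous_open_vimage continuous_intros)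
  have "((\<lambda>t::real. (1 + t) *\<^sub>R w) has_derivative (\<lambda>s. s *\<^sub>R w)) (at 0)"
    by (auto intro!: derivative_eq_intros)
  with D have "((\<lambda>t. G ((1 + t) *\<^sub>R w)) has_derivative (\<lambda>s. D (s *\<^sub>R w))) (at 0)"
    using has_derivative_compose[of "\<lambda>t. (1 + t) *\<^sub>R w"] by fastforce
  moreover have "G ((1 + t) *\<^sub>R w) = ((1 + t) * (1 + t)) *\<^sub>R G w" if "t \<in> T" for t
    using WG[of "(1 + t, 0)"] that by (simp add: T_def escale_of_real epow_two emul_of_real)
  ultimately have "((\<lambda>t. ((1 + t) * (1 + t)) *\<^sub>R G w) has_derivative (\<lambda>s. D (s *\<^sub>R w))) (at 0)"
    by (rule has_derivative_transform_within_open[OF _ T])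
  moreover have "((\<lambda>t::real. ((1 + t) * (1 + t)) *\<^sub>R G w) has_derivative (\<lambda>s. (2 * s) *\<^sub>R G w)) (at 0)"
    by (auto intro!: derivative_eq_intros simp: algebra_simps)
  ultimately have "(\<lambda>s. D (s *\<^sub>R w)) = (\<lambda>s. (2 * s) *\<^sub>R G w)"
    by (rule has_derivative_unique)
  from fun_cong[OF this, of 1] show ?thesis
    by simp
qed

text \<open>\<open>P = \<partial>F\<close> and \<open>A w = dP\<^sub>w\<close>; the symmetry of \<open>A w\<close> is the Lagrangian condition on the graph of \<open>P\<close>.\<close>

locale lagrangian_graph =
  fixes e :: real
    and U :: "((real \<times> real) ^ 'n) set"
    and P :: "(real \<times> real) ^ 'n \<Rightarrow> (real \<times> real) ^ 'n"
    and A :: "(real \<times> real) ^ 'n \<Rightarrow> (real \<times> real) ^ 'n \<Rightarrow> (real \<times> real) ^ 'n"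
  assumes open_U: "open U"
    and has_derivative_P: "w \<in> U \<Longrightarrow> (P has_derivative A w) (at w)"
    and derivative_commute_iunit: "w \<in> U \<Longrightarrow> A w (escale e iunit h) = escale e iunit (A w h)"
    and derivative_symmetric: "w \<in> U \<Longrightarrow> edot e x (A w y) = edot e y (A w x)"

lemma lagrangian_graph_if_ekahler_lagrangian_imm:
  assumes U: "open U" and graph: "\<forall>w\<in>U. phi w = (w, P w)"
    and phi: "ekahler_lagrangian_imm e U phi"
  shows "lagrangian_graph e U P (\<lambda>w. frechet_derivative P (at w))"
proof
  show "open U"
    by (fact U)
  fix w assume w: "w \<in> U"
  obtain D where D: "(phi has_derivative D) (at w)" and Omega: "\<And>X Y. eOmega e (D X) (D Y) = 0"
    using phi w unfolding ekahler_lagrangian_imm_def by blast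
  have "((\<lambda>v. v) has_derivative (\<lambda>h. fst (D h))) (at w)"
    using has_derivative_fst[OF D] by (rule has_derivative_transform_within_open[OF _ U w]) (simp add: graph)
  then have fst_D: "fst (D h) = h" for h
    using has_derivative_unique[OF _ has_derivative_ident] by metis
  have snd_D: "((\<lambda>v. snd (phi v)) has_derivative (\<lambda>h. snd (D h))) (at w)"
    using has_derivative_snd[OF D] .
  then have P': "(P has_derivative (\<lambda>h. snd (D h))) (at w)"
    by (rule has_derivative_transform_within_open[OF _ U w]) (simp add: graph)
  then have frechet: "frechet_derivative P (at w) = (\<lambda>h. snd (D h))"
    by (simp add: frechet_derivative_at[symmetric])
  show "(P has_derivative frechet_derivative P (at w)) (at w)"
    using P' frechet by simp
  have "snd (D (escale e iunit h)) $ i = emul e iunit (snd (D h) $ i)" for h i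
  proof -
    obtain Di where Di: "((\<lambda>v. snd (phi v) $ i) has_derivative Di) (at w)"
      and hol: "\<And>h. Di (escale e iunit h) = emul e iunit (Di h)"
      using phi w unfolding ekahler_lagrangian_imm_def eholo_def by blast
    have "Di = (\<lambda>h. snd (D h) $ i)"
      using has_derivative_unique[OF Di bounded_linear.has_derivative[OF bounded_linear_vec_nth snd_D]] .
    then show ?thesis
      using hol by simp
  qed
  then show "frechet_derivative P (at w) (escale e iunit h) = escale e iunit (frechet_derivative P (at w) h)" for h
    by (simp add: frechet vec_eq_iff)
  show "edot e x (frechet_derivative P (at w) y) = edot e y (frechet_derivative P (at w) x)" for x y
    using Omega[of y x] fst_D by (simp add: eOmega_eq_edot frechet) (metis edot_commute)
qed

context lagrangian_graph
begin

lemma linear_derivative: "w \<in> U \<Longrightarrow> linear (A w)"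
  using has_derivative_P has_derivative_linear by blast

lemma derivative_escale: "w \<in> U \<Longrightarrow> A w (escale e l h) = escale e l (A w h)"
  using linear_escale_if_commute_iunit linear_derivative derivative_commute_iunit by blast

lemma conical_iff_euler:
  assumes graph: "\<forall>w\<in>U. phi w = (w, P w)"
  shows "conical U phi \<longleftrightarrow> (\<forall>w\<in>U. A w w = P w)"
proof -
  have "(\<exists>D. (phi has_derivative D) (at w) \<and> phi w \<in> range D) \<longleftrightarrow> A w w = P w"
    if w: "w \<in> U" for w
  proof -
    have dphi: "(phi has_derivative (\<lambda>h. (h, A w h))) (at w)"
      using has_derivative_Pair[OF has_derivative_ident has_derivative_P[OF w]]
      by (rule has_derivative_transform_within_open[OF _ open_U w]) (simp add: graph)
    have "(\<exists>D. (phi has_derivative D) (at w) \<and> phi w \<in> range D) \<longleftrightarrow> phi w \<in> range (\<lambda>h. (h, A w h))"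
      using has_derivative_unique[OF _ dphi] dphi by blast
    also have "\<dots> \<longleftrightarrow> A w w = P w"
      using graph w by auto
    finally show ?thesis .
  qed
  then show ?thesis
    unfolding conical_def by blast
qed

lemma euler_if_homogeneous_potential:
  assumes G: "eholo e U G" and partial: "\<forall>z\<in>U. \<forall>i. epartial G z i = P z $ i"
    and hom: "ehomogeneous e 2 U G" and z: "z \<in> U"
  shows "A z z = P z"
proof -
  have DG: "(G has_derivative (\<lambda>h. edot e h (P w))) (at w)" if "w \<in> U" for w
    using derivative_eq_edot_if_potential[OF G that] partial that by blast
  have "((\<lambda>w. 2 *\<^sub>R G w) has_derivative (\<lambda>h. edot e z (A z h) + edot e h (P z))) (at z)"
    using has_derivative_edot_self[OF has_derivative_P[OF z]]
  proof (rule has_derivative_transform_within_open[OF _ open_U z])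
    show "edot e w (P w) = 2 *\<^sub>R G w" if "w \<in> U" for w
      using derivative_self_eq_if_ehomogeneous_two[OF hom that DG[OF that]] by simp
  qed
  moreover have "((\<lambda>w. 2 *\<^sub>R G w) has_derivative (\<lambda>h. 2 *\<^sub>R edot e h (P z))) (at z)"
    using DG[OF z] by (rule has_derivative_scaleR_right)
  ultimately have "(\<lambda>h. edot e z (A z h) + edot e h (P z)) = (\<lambda>h. 2 *\<^sub>R edot e h (P z))"
    by (rule has_derivative_unique)
  then have "edot e h (A z z) + edot e h (P z) = edot e h (P z) + edot e h (P z)" for h
    using derivative_symmetric[OF z, of z h] by (metis scaleR_2)
  then have "edot e h (A z z) = edot e h (P z)" for h
    by simp
  then show ?thesis
    using vec_eq_iff_edot by blast
qed

lemma has_derivative_half_edot_self: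
  assumes euler: "\<forall>w\<in>U. A w w = P w" and z: "z \<in> U"
  shows "((\<lambda>w. (1/2) *\<^sub>R edot e w (P w)) has_derivative (\<lambda>h. edot e h (P z))) (at z)"
proof -
  have "((\<lambda>w. (1/2) *\<^sub>R edot e w (P w)) has_derivative
      (\<lambda>h. (1/2) *\<^sub>R (edot e z (A z h) + edot e h (P z)))) (at z)"
    using has_derivative_edot_self[OF has_derivative_P[OF z]] by (rule has_derivative_scaleR_right)
  moreover have "edot e z (A z h) = edot e h (P z)" for h
    using derivative_symmetric[OF z, of z h] euler z by simp
  moreover have "(1/2::real) *\<^sub>R (x + x) = x" for x :: "real \<times> real"
    by (metis scaleR_2 scaleR_half_double)
  ultimately show ?thesis
    by simp
qed

text \<open>Under the Euler equation, \<open>m \<mapsto> m\<^sup>-\<^sup>1 P (m z)\<close> is locally constant: with \<open>w = l z\<close> one has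
  \<open>A\<^sub>w (\<delta> z) = \<delta> l\<^sup>-\<^sup>1 A\<^sub>w w = \<delta> l\<^sup>-\<^sup>1 P w\<close>, which cancels the derivative \<open>-\<delta> l\<^sup>-\<^sup>2\<close> of \<open>l\<^sup>-\<^sup>1\<close>.\<close>

lemma has_derivative_einv_escale_zero:
  assumes euler: "\<forall>w\<in>U. A w w = P w" and lz: "escale e l z \<in> U" and l: "enorm2 e l \<noteq> 0"
  shows "((\<lambda>m. escale e (einv e m) (P (escale e m z))) has_derivative (\<lambda>_. 0)) (at l)"
proof -
  define w where "w = escale e l z"
  have "((\<lambda>m. escale e m z) has_derivative (\<lambda>\<delta>. escale e \<delta> z)) (at l)"
    using bounded_linear_imp_has_derivative[OF bounded_bilinear.bounded_linear_left[OF bounded_bilinear_escale]] .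
  then have "((\<lambda>m. P (escale e m z)) has_derivative (\<lambda>\<delta>. A w (escale e \<delta> z))) (at l)"
    using has_derivative_compose has_derivative_P[OF lz] unfolding w_def by blast
  from bounded_bilinear.FDERIV[OF bounded_bilinear_escale has_derivative_einv[OF l] this]
  have "((\<lambda>m. escale e (einv e m) (P (escale e m z))) has_derivative
      (\<lambda>\<delta>. escale e (einv e l) (A w (escale e \<delta> z))
          + escale e (- emul e \<delta> (emul e (einv e l) (einv e l))) (P w))) (at l)"
    unfolding w_def .
  moreover have "A w (escale e \<delta> z) = escale e (emul e \<delta> (einv e l)) (P w)" for \<delta>
  proof -
    have "escale e \<delta> z = escale e (emul e \<delta> (einv e l)) w"
      by (simp add: w_def escale_escale emul_assoc emul_commute[of e "einv e l"] emul_einv[OF l])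
    then have "A w (escale e \<delta> z) = escale e (emul e \<delta> (einv e l)) (A w w)"
      using derivative_escale[OF lz] by (metis w_def)
    then show ?thesis
      using euler lz unfolding w_def by simp
  qed
  ultimately show ?thesis
    by (simp add: escale_escale emul_left_commute bounded_bilinear.minus_left[OF bounded_bilinear_escale])
qed

lemma P_escale_if_euler:
  assumes euler: "\<forall>w\<in>U. A w w = P w" and z: "z \<in> U"
  obtains \<rho> where "\<rho> > 0"
    and "\<And>l. l \<in> ball (1, 0) \<rho> \<Longrightarrow> escale e l z \<in> U \<and> P (escale e l z) = escale e l (P z)"
proof -
  define S where "S = {l. escale e l z \<in> U} \<inter> {l. enorm2 e l \<noteq> 0}"
  have "continuous_on UNIV (\<lambda>l. escale e l z)"
    using linear_continuous_on[OF bounded_bilinear.bounded_linear_left[OF bounded_bilinear_escale]] .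
  then have "open S"
    unfolding S_def using open_U open_enorm2_nonzero
    by (auto intro!: open_Int simp: open_vimage[of U, unfolded vimage_def])
  moreover have "(1, 0) \<in> S"
    using z by (simp add: S_def enorm2_def)
  ultimately obtain \<rho> where \<rho>: "\<rho> > 0" "ball (1, 0) \<rho> \<subseteq> S"
    using open_contains_ball by blast
  define r where "r m = escale e (einv e m) (P (escale e m z))" for m
  have "(r has_derivative (\<lambda>_. 0)) (at l within ball (1, 0) \<rho>)" if "l \<in> ball (1, 0) \<rho>" for l
    using \<rho>(2) that has_derivative_einv_escale_zero[OF euler, of l z] unfolding r_def S_def
    by (blast intro: has_derivative_at_withinI)
  then have "\<exists>c. \<forall>l\<in>ball (1, 0) \<rho>. r l = c"
    by (rule has_derivative_zero_constant[OF convex_ball])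
  then obtain c where c: "\<And>l. l \<in> ball (1, 0) \<rho> \<Longrightarrow> r l = c"
    by blast
  have c_eq: "c = P z"
    using c[of "(1, 0)"] \<rho>(1) by (simp add: r_def)
  show ?thesis
  proof (rule that[OF \<rho>(1)])
    fix l :: "real \<times> real" assume l: "l \<in> ball (1, 0) \<rho>"
    then have lz: "escale e l z \<in> U" and nz: "enorm2 e l \<noteq> 0"
      using \<rho>(2) by (auto simp: S_def)
    have "P (escale e l z) = escale e l (r l)"
      by (simp add: r_def escale_escale emul_einv[OF nz])
    then show "escale e l z \<in> U \<and> P (escale e l z) = escale e l (P z)"
      using c[OF l] c_eq lz by simp
  qed
qed

lemma homogeneous_potential_if_euler:
  assumes euler: "\<forall>w\<in>U. A w w = P w"
  shows "\<exists>G. eholo e U G \<and> (\<forall>z\<in>U. \<forall>i. epartial G z i = P z $ i) \<and> ehomogeneous e 2 U G"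
proof (intro exI conjI)
  define G where "G w = (1/2::real) *\<^sub>R edot e w (P w)" for w
  have DG: "(G has_derivative (\<lambda>h. edot e h (P z))) (at z)" if "z \<in> U" for z
    unfolding G_def using has_derivative_half_edot_self[OF euler that] .
  show "eholo e U G"
    unfolding eholo_def using DG edot_escale_left by blast
  show "\<forall>z\<in>U. \<forall>i. epartial G z i = P z $ i"
    by (simp add: epartial_def frechet_derivative_at[OF DG, symmetric])
  show "ehomogeneous e 2 U G"
    unfolding ehomogeneous_def
  proof
    fix z assume z: "z \<in> U"
    obtain \<rho> where \<rho>: "\<rho> > 0"
      and hom: "\<And>l. l \<in> ball (1, 0) \<rho> \<Longrightarrow> escale e l z \<in> U \<and> P (escale e l z) = escale e l (P z)"
      using P_escale_if_euler[OF euler z] by blast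
    have "G (escale e l z) = emul e (epow e l 2) (G z)" if "l \<in> ball (1, 0) \<rho>" for l
      using hom[OF that] by (simp add: G_def edot_escale_escale epow_two emul_scaleR_right)
    then show "\<exists>W. open W \<and> (1, 0) \<in> W \<and>
        (\<forall>l\<in>W. escale e l z \<in> U \<and> G (escale e l z) = emul e (epow e l 2) (G z))"
      using \<rho> hom by (intro exI[of _ "ball (1, 0) \<rho>"]) auto
  qed
qed

end

theorem mainTheorem5:
  fixes eps :: real
    and U :: "((real \<times> real) ^ 'n) set"
    and F :: "(real \<times> real) ^ 'n \<Rightarrow> real \<times> real"
    and phi :: "(real \<times> real) ^ 'n \<Rightarrow> ((real \<times> real) ^ 'n) \<times> ((real \<times> real) ^ 'n)"
  assumes eps: "eps = 1 \<or> eps = -1"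
    and U: "open U" "connected U"
    and F: "eholo eps U F"
    and phi_def: "\<forall>z\<in>U. phi z = (z, (\<chi> i. epartial F z i))"
    and phi: "ekahler_lagrangian_imm eps U phi"
  shows "(\<exists>G. eholo eps U G \<and> (\<forall>z\<in>U. \<forall>i. epartial G z i = epartial F z i)
              \<and> ehomogeneous eps 2 U G) \<longleftrightarrow> conical U phi"
proof -
  define P where "P z = (\<chi> i. epartial F z i)" for z
  have graph: "\<forall>w\<in>U. phi w = (w, P w)"
    using phi_def by (simp add: P_def)
  interpret lagrangian_graph eps U P "\<lambda>w. frechet_derivative P (at w)"
    using lagrangian_graph_if_ekahler_lagrangian_imm[OF U(1) graph phi] .
  have "epartial F z i = P z $ i" for z i
    by (simp add: P_def)
  then show ?thesis
    using conical_iff_euler[OF graph] homogeneous_potential_if_euler euler_if_homogeneous_potential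
    by metis
qed

end
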